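(* Let $d\ge2$, $\alpha\in(1,2)$, and let $X\sim\mu$, where $\mu$ is a nondegenerate $\alpha$-stable distribution on $\mathbb{R}^d$ with no shift and characteristic exponent $|z|^\alpha V(u_z)$, and suppose the density $g$ of $\mu$ is symmetric, $g(x)=g(-x)$ (so $V$ is real and positive). Let $Z=(Z_1,\dots,Z_d)$ with $Z_i$ i.i.d. $N(0,1)$, and let $\zeta$ be a positive random variable independent of $Z$ with $\mathbb{E}e^{-t\zeta}=e^{-t^{\alpha/2}}$ for $t\ge0$. Then $V(Z/|Z|)^{1/\alpha}\sqrt{2\zeta}\,|Z|$ has the same distribution as $|X|$.
   Context: $\mathbb{S}^{d-1}$ is the unit sphere, $u_z=z/|z|$. An $\alpha$-stable distribution ($\alpha\ne1$) with no shift has $\hat\mu(z)=\exp\{-|z|^\alpha V(u_z)\}$, $V(u)=\int_{\mathbb{S}^{d-1}}|\langle u,v\rangle|^\alpha[1-i\tan(\pi\alpha/2)\mathrm{sgn}\langle u,v\rangle]\lambda(dv)$, $\lambda$ a finite nonzero Borel measure on the sphere. Nondegenerate: support not contained in a proper affine subspace. *)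

theory Defs
  imports "HOL-Probability.Probability"
begin

definition char_fun_mv :: "'a::euclidean_space measure \<Rightarrow> 'a \<Rightarrow> complex" where
  "char_fun_mv M z = (CLINT x|M. cis (z \<bullet> x))"

text \<open>The function V of an alpha-stable law with spectral measure lam (a finite
  measure on borel sets concentrated on the unit sphere).\<close>
definition stable_V :: "real \<Rightarrow> 'a::euclidean_space measure \<Rightarrow> 'a \<Rightarrow> complex" where
  "stable_V \<alpha> lam u = (CLINT v|lam. complex_of_real (\<bar>u \<bullet> v\<bar> powr \<alpha>) *
       (1 - \<i> * complex_of_real (tan (pi * \<alpha> / 2) * sgn (u \<bullet> v))))"

text \<open>Nondegenerate: the support is not contained in a proper affine subspace,
  i.e. no proper affine subspace carries full mass (affine sets are closed).\<close>
definition nondegenerate :: "'a::euclidean_space measure \<Rightarrow> bool" where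
  "nondegenerate M \<longleftrightarrow> \<not> (\<exists>A. affine A \<and> A \<noteq> UNIV \<and> measure M A = 1)"

end

theory Submission
  imports Defs
begin

text \<open>Symmetry of the density makes the characteristic function real, and since it is bounded by 1
  this forces \<open>V\<close> to be real and nonnegative on the sphere. For \<open>k \<in> \<nat>\<close>, integrating the
  Gaussian characteristic function against \<open>\<mu>\<close> gives
  \<open>E exp (- k |X|\<^sup>2) = E exp (- (2k) powr (\<alpha>/2) |Z| powr \<alpha> V(Z/|Z|))\<close>; integrating out \<open>\<zeta>\<close>
  through its Laplace transform shows that \<open>R = V(Z/|Z|) powr (1/\<alpha>) sqrt (2\<zeta>) |Z|\<close> satisfies
  the same identity for \<open>E exp (- k R\<^sup>2)\<close>. These numbers are the moments of \<open>exp (- |X|\<^sup>2)\<close> and \<open>exp (- R\<^sup>2)\<close>,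
  which live on [0,1] and are therefore determined by their moments (Weierstrass approximation);
  \<open>r \<mapsto> exp (- r\<^sup>2)\<close> is injective on [0,\<infinity>).\<close>

lemma integrable_power_unit_interval:
  fixes P :: "real measure"
  assumes "prob_space P" "sets P = sets borel" "AE x in P. 0 \<le> x \<and> x \<le> 1"
  shows "integrable P (\<lambda>x. x ^ k)"
proof -
  interpret prob_space P by fact
  have [measurable_cong]: "sets P = sets borel" by fact
  show ?thesis
  proof (rule integrable_const_bound[where B=1])
    show "AE x in P. norm (x ^ k) \<le> 1" using assms(3) by eventually_elim (auto intro: power_le_one)
  qed simp
qed

lemma integral_continuous_eq_if_moments_eq:
  fixes P Q :: "real measure" and f :: "real \<Rightarrow> real"
  assumes P: "prob_space P" "sets P = sets borel" "AE x in P. 0 \<le> x \<and> x \<le> 1"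
    and Q: "prob_space Q" "sets Q = sets borel" "AE x in Q. 0 \<le> x \<and> x \<le> 1"
    and moments: "\<And>k. (\<integral>x. x ^ k \<partial>P) = (\<integral>x. x ^ k \<partial>Q)"
    and f: "continuous_on UNIV f"
  shows "(\<integral>x. f x \<partial>P) = (\<integral>x. f x \<partial>Q)"
proof -
  have [measurable]: "f \<in> borel_measurable borel" using f by (rule borel_measurable_continuous_onI)
  obtain B where B: "\<And>x. x \<in> {0..1} \<Longrightarrow> \<bar>f x\<bar> \<le> B"
    using compact_imp_bounded[OF compact_continuous_image[OF continuous_on_subset[OF f] compact_Icc]]
    by (fastforce simp: bounded_iff)
  have close: "\<bar>(\<integral>x. f x \<partial>P) - (\<integral>x. f x \<partial>Q)\<bar> \<le> 2 * e" if "e > 0" for e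
  proof -
    obtain p where p: "real_polynomial_function p" "\<And>x. x \<in> {0..1} \<Longrightarrow> \<bar>f x - p x\<bar> < e"
      using Stone_Weierstrass_real_polynomial_function[OF compact_Icc continuous_on_subset[OF f] \<open>e > 0\<close>]
      by auto
    obtain a n where p_eq: "p = (\<lambda>x. \<Sum>i\<le>n. a i * x ^ i)"
      using real_polynomial_function_imp_sum[OF p(1)] by blast
    have approx: "\<bar>(\<integral>x. f x \<partial>R) - (\<integral>x. p x \<partial>R)\<bar> \<le> e"
      and integral_p: "(\<integral>x. p x \<partial>R) = (\<Sum>i\<le>n. a i * (\<integral>x. x ^ i \<partial>R))"
      if R: "prob_space R" "sets R = sets borel" "AE x in R. 0 \<le> x \<and> x \<le> 1" for R
    proof -
      interpret R: prob_space R by fact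
      have [measurable_cong]: "sets R = sets borel" by fact
      have int_power: "integrable R (\<lambda>x. x ^ i)" for i
        using integrable_power_unit_interval[OF R] .
      then have int_p: "integrable R p" unfolding p_eq by auto
      show "(\<integral>x. p x \<partial>R) = (\<Sum>i\<le>n. a i * (\<integral>x. x ^ i \<partial>R))"
        unfolding p_eq by (subst Bochner_Integration.integral_sum) (auto intro: int_power)
      have "AE x in R. norm (f x) \<le> B" using R(3) by eventually_elim (use B in auto)
      then have int_f: "integrable R f" by (rule R.integrable_const_bound) simp
      have "\<bar>(\<integral>x. f x \<partial>R) - (\<integral>x. p x \<partial>R)\<bar> \<le> (\<integral>x. \<bar>f x - p x\<bar> \<partial>R)"
        using int_p int_f integral_abs_bound[of R "\<lambda>x. f x - p x"] by simp
      also have "\<dots> \<le> (\<integral>x. e \<partial>R)"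
      proof (rule integral_mono_AE)
        show "AE x in R. \<bar>f x - p x\<bar> \<le> e"
          using R(3) by eventually_elim (use p(2) in \<open>auto intro: less_imp_le\<close>)
      qed (use int_p int_f in auto)
      finally show "\<bar>(\<integral>x. f x \<partial>R) - (\<integral>x. p x \<partial>R)\<bar> \<le> e" by (simp add: R.prob_space)
    qed
    have "(\<integral>x. p x \<partial>P) = (\<integral>x. p x \<partial>Q)"
      by (simp only: integral_p[OF P] integral_p[OF Q] moments)
    then show ?thesis using approx[OF P] approx[OF Q] by linarith
  qed
  show ?thesis
  proof (rule ccontr)
    let ?d = "\<bar>(\<integral>x. f x \<partial>P) - (\<integral>x. f x \<partial>Q)\<bar>"
    assume "(\<integral>x. f x \<partial>P) \<noteq> (\<integral>x. f x \<partial>Q)"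
    moreover from this have "?d \<le> 2 * (?d / 4)" by (intro close) simp
    ultimately show False by simp
  qed
qed

text \<open>Hausdorff's moment problem on the unit interval is determinate: the cdf at a is
  approximated by integrals of continuous ramps, which are fixed by the moments.\<close>
lemma measure_eq_if_moments_eq_unit_interval:
  fixes P Q :: "real measure"
  assumes P: "prob_space P" "sets P = sets borel" "AE x in P. 0 \<le> x \<and> x \<le> 1"
    and Q: "prob_space Q" "sets Q = sets borel" "AE x in Q. 0 \<le> x \<and> x \<le> 1"
    and moments: "\<And>k. (\<integral>x. x ^ k \<partial>P) = (\<integral>x. x ^ k \<partial>Q)"
  shows "P = Q"
proof (rule cdf_unique)
  show "real_distribution P" "real_distribution Q" using P Q
    by (auto simp: real_distribution_def real_distribution_axioms_def)
  show "cdf P = cdf Q"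
  proof
    fix a :: real
    define f where "f k x = max 0 (min 1 (1 - real (Suc k) * (x - a)))" for k :: nat and x :: real
    have f_cont: "continuous_on UNIV (f k)" for k unfolding f_def by (intro continuous_intros)
    have f_lim: "(\<lambda>k. f k x) \<longlonglongrightarrow> indicator {..a} x" for x
    proof (cases "x \<le> a")
      case True
      then have "f k x = 1" for k unfolding f_def by (auto simp: mult_nonneg_nonpos)
      then show ?thesis using True by simp
    next
      case False
      obtain N :: nat where N: "1 / (x - a) < N" using reals_Archimedean2 by blast
      have "eventually (\<lambda>k. f k x = 0) sequentially"
      proof (rule eventually_sequentiallyI[of N])
        fix k assume "N \<le> k"
        then have "1 / (x - a) < real (Suc k)" using N by linarith
        then have "1 < real (Suc k) * (x - a)" using False by (simp add: field_simps)
        then show "f k x = 0" unfolding f_def by simp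
      qed
      then show ?thesis using False by (simp add: tendsto_eventually)
    qed
    have to_cdf: "(\<lambda>k. \<integral>x. f k x \<partial>R) \<longlonglongrightarrow> cdf R a"
      if R: "prob_space R" "sets R = sets borel" for R
    proof -
      interpret R: prob_space R by fact
      have [measurable_cong]: "sets R = sets borel" by fact
      have [measurable]: "f k \<in> borel_measurable borel" for k
        using f_cont by (rule borel_measurable_continuous_onI)
      have "(\<lambda>k. \<integral>x. f k x \<partial>R) \<longlonglongrightarrow> (\<integral>x. indicator {..a} x \<partial>R)"
        by (rule integral_dominated_convergence[where w="\<lambda>_. 1"]) (use f_lim in \<open>auto simp: f_def\<close>)
      then show ?thesis by (simp add: cdf_def)
    qed
    have "(\<lambda>k. \<integral>x. f k x \<partial>P) \<longlonglongrightarrow> cdf Q a"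
      using to_cdf[OF Q(1,2)] integral_continuous_eq_if_moments_eq[OF P Q moments f_cont] by simp
    then show "cdf P a = cdf Q a" using to_cdf[OF P(1,2)] LIMSEQ_unique by blast
  qed
qed

lemma distr_eq_if_integral_exp_neg_sq_eq:
  fixes X :: "'a \<Rightarrow> real" and Y :: "'b \<Rightarrow> real"
  assumes "prob_space M" "prob_space N"
    and X: "X \<in> borel_measurable M" "\<And>\<omega>. \<omega> \<in> space M \<Longrightarrow> 0 \<le> X \<omega>"
    and Y: "Y \<in> borel_measurable N" "\<And>\<omega>. \<omega> \<in> space N \<Longrightarrow> 0 \<le> Y \<omega>"
    and eq: "\<And>k::nat. (\<integral>\<omega>. exp (- real k * X \<omega> ^ 2) \<partial>M) = (\<integral>\<omega>. exp (- real k * Y \<omega> ^ 2) \<partial>N)"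
  shows "distr M borel X = distr N borel Y"
proof -
  interpret M: prob_space M by fact
  interpret N: prob_space N by fact
  define h where "h r = exp (- (r ^ 2))" for r :: real
  define h_inv where "h_inv y = sqrt (- ln y)" for y :: real
  have h_inv_h: "r \<ge> 0 \<Longrightarrow> h_inv (h r) = r" for r by (simp add: h_inv_def h_def)
  have [measurable]: "h \<in> borel_measurable borel" unfolding h_def by measurable
  have [measurable]: "h_inv \<in> borel_measurable borel" unfolding h_inv_def by measurable
  have [measurable]: "X \<in> borel_measurable M" "Y \<in> borel_measurable N" using X Y by simp_all
  have "distr M borel (\<lambda>\<omega>. h (X \<omega>)) = distr N borel (\<lambda>\<omega>. h (Y \<omega>))"
  proof (rule measure_eq_if_moments_eq_unit_interval)
    show "prob_space (distr M borel (\<lambda>\<omega>. h (X \<omega>)))" by (rule M.prob_space_distr) simp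
    show "prob_space (distr N borel (\<lambda>\<omega>. h (Y \<omega>)))" by (rule N.prob_space_distr) simp
    show "AE x in distr M borel (\<lambda>\<omega>. h (X \<omega>)). 0 \<le> x \<and> x \<le> 1"
      by (subst AE_distr_iff) (auto simp: h_def X)
    show "AE x in distr N borel (\<lambda>\<omega>. h (Y \<omega>)). 0 \<le> x \<and> x \<le> 1"
      by (subst AE_distr_iff) (auto simp: h_def Y)
    show "(\<integral>x. x ^ k \<partial>distr M borel (\<lambda>\<omega>. h (X \<omega>))) = (\<integral>x. x ^ k \<partial>distr N borel (\<lambda>\<omega>. h (Y \<omega>)))" for k
      using eq[of k] by (simp add: integral_distr h_def exp_of_nat_mult[symmetric])
  qed simp_all
  then have "distr (distr M borel (\<lambda>\<omega>. h (X \<omega>))) borel h_inv = distr (distr N borel (\<lambda>\<omega>. h (Y \<omega>))) borel h_inv"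
    by simp
  then have "distr M borel (\<lambda>\<omega>. h_inv (h (X \<omega>))) = distr N borel (\<lambda>\<omega>. h_inv (h (Y \<omega>)))"
    by (simp add: distr_distr comp_def)
  moreover have "distr M borel (\<lambda>\<omega>. h_inv (h (X \<omega>))) = distr M borel X"
    by (rule distr_cong) (auto simp: h_inv_h X)
  moreover have "distr N borel (\<lambda>\<omega>. h_inv (h (Y \<omega>))) = distr N borel Y"
    by (rule distr_cong) (auto simp: h_inv_h Y)
  ultimately show ?thesis by simp
qed

lemma char_fun_std_normal_vector:
  fixes Z :: "'w \<Rightarrow> real ^ 'n"
  assumes "prob_space M"
    and Z_meas: "Z \<in> borel_measurable M"
    and Z_gauss: "\<And>i. distributed M lborel (\<lambda>\<omega>. Z \<omega> $ i) std_normal_density"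
    and Z_indep: "prob_space.indep_vars M (\<lambda>_. borel) (\<lambda>i \<omega>. Z \<omega> $ i) UNIV"
  shows "(CLINT \<omega>|M. cis (Z \<omega> \<bullet> y)) = complex_of_real (exp (- (norm y ^ 2) / 2))"
proof -
  interpret prob_space M by fact
  have [measurable]: "(\<lambda>\<omega>. Z \<omega> $ i) \<in> borel_measurable M" for i
    using measurable_compose[OF Z_meas borel_measurable_nth] by simp
  define X where "X i \<omega> = Z \<omega> $ i * y $ i" for i \<omega>
  have [measurable]: "X i \<in> borel_measurable M" for i unfolding X_def by measurable
  have X_indep: "indep_vars (\<lambda>_. borel) X UNIV"
    unfolding X_def by (rule indep_vars_compose2[OF Z_indep]) simp
  have char_X: "char (distr M borel (X i)) 1 = complex_of_real (exp (- ((y $ i) ^ 2) / 2))" for i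
  proof -
    have "distr M borel (\<lambda>\<omega>. Z \<omega> $ i) = std_normal_distribution"
      using Z_gauss[of i] by (simp add: distributed_def cong: distr_cong)
    then have "char (distr M borel (\<lambda>\<omega>. Z \<omega> $ i)) (y $ i) = complex_of_real (exp (- ((y $ i) ^ 2) / 2))"
      by (simp add: char_std_normal_distribution)
    then show ?thesis by (simp add: char_def integral_distr X_def mult.commute)
  qed
  have "(CLINT \<omega>|M. cis (Z \<omega> \<bullet> y)) = char (distr M borel (\<lambda>\<omega>. \<Sum>i\<in>UNIV. X i \<omega>)) 1"
    by (simp add: char_def integral_distr X_def inner_vec_def cis_conv_exp)
  also have "\<dots> = (\<Prod>i\<in>UNIV. char (distr M borel (X i)) 1)"
    by (rule char_distr_sum[OF X_indep])
  also have "\<dots> = complex_of_real (exp (\<Sum>i\<in>UNIV. - ((y $ i) ^ 2) / 2))"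
    by (simp add: char_X exp_sum)
  also have "(\<Sum>i\<in>UNIV. - ((y $ i) ^ 2) / 2) = - (norm y ^ 2) / 2"
    by (simp add: norm_vec_def L2_set_def sum_negf sum_nonneg flip: sum_divide_distrib)
  finally show ?thesis .
qed

lemma char_fun_mv_norm_le_1:
  assumes "prob_space M"
  shows "norm (char_fun_mv M z) \<le> 1"
proof -
  interpret prob_space M by fact
  have "norm (char_fun_mv M z) \<le> (\<integral>x. norm (cis (z \<bullet> x)) \<partial>M)"
    unfolding char_fun_mv_def by (rule integral_norm_bound)
  then show ?thesis by (simp add: prob_space)
qed

lemma char_fun_mv_real_if_symmetric_density:
  fixes g :: "real ^ 'n \<Rightarrow> real"
  assumes g: "g \<in> borel_measurable borel" "\<And>x. g x \<ge> 0" "\<And>x. g x = g (- x)"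
  shows "Im (char_fun_mv (density lborel g) z) = 0"
proof -
  have [measurable]: "(\<lambda>x::real^'n. cis (z \<bullet> x)) \<in> borel_measurable borel" for z
    unfolding cis_conv_exp by measurable
  have reflect: "distr lborel borel (\<lambda>x::real^'n. - x) = lborel"
    using lborel_affine[of "-1 :: real" 0] by (simp add: density_1) (erule sym)
  have char_eq: "char_fun_mv (density lborel g) z = (\<integral>x. g x *\<^sub>R cis (z \<bullet> x) \<partial>lborel)" for z
    unfolding char_fun_mv_def using g by (subst integral_density) auto
  have "char_fun_mv (density lborel g) z = (\<integral>x. g x *\<^sub>R cis (z \<bullet> x) \<partial>distr lborel borel uminus)"
    by (simp add: reflect char_eq)
  also have "\<dots> = char_fun_mv (density lborel g) (- z)"
    using g by (subst integral_distr) (auto simp: char_eq)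
  also have "\<dots> = cnj (char_fun_mv (density lborel g) z)"
    unfolding char_fun_mv_def by (simp flip: cis_cnj)
  finally show ?thesis by (metis Reals_cnj_iff complex_is_Real_iff)
qed

text \<open>If \<open>Im (V u) \<noteq> 0\<close>, the radius \<open>r\<close> can be tuned so that \<open>r powr \<alpha> * Im (V u) = \<plusminus>pi/2\<close>,
  which makes the characteristic function at \<open>r *\<^sub>R u\<close> non-real.\<close>
lemma stable_exponent_real_nonneg_if_char_fun_mv_real:
  fixes \<mu> :: "'a::euclidean_space measure" and V :: "'a \<Rightarrow> complex"
  assumes "prob_space \<mu>" "\<alpha> > 0"
    and char: "\<And>z. char_fun_mv \<mu> z = exp (- complex_of_real (norm z powr \<alpha>) * V (z /\<^sub>R norm z))"
    and char_real: "\<And>z. Im (char_fun_mv \<mu> z) = 0"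
    and "norm u = 1"
  shows "Im (V u) = 0" "0 \<le> Re (V u)"
proof -
  have char_ray: "char_fun_mv \<mu> (r *\<^sub>R u) = exp (- complex_of_real (r powr \<alpha>) * V u)" if "r > 0" for r
    using char[of "r *\<^sub>R u"] \<open>norm u = 1\<close> that by simp
  show "Im (V u) = 0"
  proof (rule ccontr)
    assume "Im (V u) \<noteq> 0"
    define r where "r = (pi / (2 * \<bar>Im (V u)\<bar>)) powr (1 / \<alpha>)"
    have "r > 0" using \<open>Im (V u) \<noteq> 0\<close> by (simp add: r_def)
    have "r powr \<alpha> = pi / (2 * \<bar>Im (V u)\<bar>)"
      unfolding r_def using \<open>\<alpha> > 0\<close> \<open>Im (V u) \<noteq> 0\<close> by (simp add: powr_powr)
    then have "- (r powr \<alpha>) * Im (V u) = (if Im (V u) > 0 then - (pi / 2) else pi / 2)"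
      using \<open>Im (V u) \<noteq> 0\<close> by (auto simp: abs_if field_simps)
    then have "sin (- (r powr \<alpha>) * Im (V u)) \<noteq> 0" by simp
    moreover have "Im (char_fun_mv \<mu> (r *\<^sub>R u))
        = exp (- (r powr \<alpha>) * Re (V u)) * sin (- (r powr \<alpha>) * Im (V u))"
      using char_ray[OF \<open>r > 0\<close>] by (simp add: Im_exp)
    ultimately show False using char_real by simp
  qed
  have "norm (char_fun_mv \<mu> (1 *\<^sub>R u)) = exp (- Re (V u))"
    using char_ray[of 1] by (simp add: norm_exp_eq_Re)
  then have "exp (- Re (V u)) \<le> 1"
    using char_fun_mv_norm_le_1[OF \<open>prob_space \<mu>\<close>] by metis
  then show "0 \<le> Re (V u)" by simp
qed

lemma stable_V_zero [simp]: "stable_V \<alpha> lam 0 = 0"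
  by (simp add: stable_V_def)

lemma borel_measurable_stable_V:
  fixes lam :: "'a::euclidean_space measure"
  assumes "sets lam = sets borel" "finite_measure lam"
  shows "stable_V \<alpha> lam \<in> borel_measurable borel"
proof -
  interpret finite_measure lam by fact
  have [measurable]: "(\<lambda>(u::'a, v). complex_of_real (\<bar>u \<bullet> v\<bar> powr \<alpha>) *
      (1 - \<i> * complex_of_real (tan (pi * \<alpha> / 2) * sgn (u \<bullet> v)))) \<in> borel_measurable (borel \<Otimes>\<^sub>M lam)"
    unfolding measurable_cong_sets[OF sets_pair_measure_cong[OF refl assms(1)] refl] by measurable
  show ?thesis unfolding stable_V_def by measurable
qed

text \<open>Averaging the Gaussian characteristic function over \<open>\<mu>\<close> and swapping the integrals.\<close>
lemma integral_exp_neg_sq_norm_eq_char_fun_mv: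
  fixes \<mu> :: "(real ^ 'n) measure" and Z :: "'w \<Rightarrow> real ^ 'n"
  assumes "prob_space \<mu>" "sets \<mu> = sets borel" "prob_space M"
    and "Z \<in> borel_measurable M"
    and "\<And>i. distributed M lborel (\<lambda>\<omega>. Z \<omega> $ i) std_normal_density"
    and "prob_space.indep_vars M (\<lambda>_. borel) (\<lambda>i \<omega>. Z \<omega> $ i) UNIV"
    and "t \<ge> 0"
  shows "complex_of_real (\<integral>x. exp (- t * norm x ^ 2) \<partial>\<mu>) = (CLINT \<omega>|M. char_fun_mv \<mu> (sqrt (2 * t) *\<^sub>R Z \<omega>))"
proof -
  interpret \<mu>: prob_space \<mu> by fact
  interpret M: prob_space M by fact
  interpret \<mu>M: pair_sigma_finite \<mu> M ..
  interpret prob_space "\<mu> \<Otimes>\<^sub>M M" by (rule prob_space_pair) fact+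
  have [measurable_cong]: "sets \<mu> = sets borel" by fact
  have [measurable]: "Z \<in> borel_measurable M" by fact
  let ?c = "sqrt (2 * t)"
  have gauss: "exp (- t * norm x ^ 2) = exp (- (norm (?c *\<^sub>R x) ^ 2) / 2)" for x :: "real ^ 'n"
    using \<open>t \<ge> 0\<close> by (simp add: power_mult_distrib)
  have "integrable (\<mu> \<Otimes>\<^sub>M M) (\<lambda>(x, \<omega>). cis (Z \<omega> \<bullet> (?c *\<^sub>R x)))"
    by (rule integrable_const_bound[where B=1]) (auto simp: cis_conv_exp split_beta)
  note Fubini = \<mu>M.Fubini_integral[OF this]
  have "complex_of_real (\<integral>x. exp (- t * norm x ^ 2) \<partial>\<mu>) = (CLINT x|\<mu>. CLINT \<omega>|M. cis (Z \<omega> \<bullet> (?c *\<^sub>R x)))"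
    by (simp only: gauss char_fun_std_normal_vector[OF assms(3-6)] integral_complex_of_real)
  also have "\<dots> = (CLINT \<omega>|M. char_fun_mv \<mu> (?c *\<^sub>R Z \<omega>))"
    unfolding Fubini[symmetric] char_fun_mv_def by (simp add: inner_commute)
  finally show ?thesis .
qed

lemma integral_exp_neg_mult_indep_eq_laplace:
  fixes Z :: "'w \<Rightarrow> 'a::topological_space" and \<zeta> :: "'w \<Rightarrow> real" and C :: "'a \<Rightarrow> real"
  assumes "prob_space M"
    and [measurable]: "Z \<in> borel_measurable M" "\<zeta> \<in> borel_measurable M"
      "C \<in> borel_measurable borel" "L \<in> borel_measurable borel"
    and \<zeta>_nonneg: "\<And>\<omega>. \<omega> \<in> space M \<Longrightarrow> 0 \<le> \<zeta> \<omega>"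
    and C_nonneg: "\<And>z. 0 \<le> C z"
    and indep: "distr M (borel \<Otimes>\<^sub>M borel) (\<lambda>\<omega>. (Z \<omega>, \<zeta> \<omega>)) = distr M borel Z \<Otimes>\<^sub>M distr M borel \<zeta>"
    and laplace: "\<And>t. t \<ge> 0 \<Longrightarrow> prob_space.expectation M (\<lambda>\<omega>. exp (- t * \<zeta> \<omega>)) = L t"
  shows "(\<integral>\<omega>. exp (- (C (Z \<omega>) * \<zeta> \<omega>)) \<partial>M) = (\<integral>\<omega>. L (C (Z \<omega>)) \<partial>M)"
proof -
  interpret M: prob_space M by fact
  interpret PZ: prob_space "distr M borel Z" by (rule M.prob_space_distr) simp
  interpret P\<zeta>: prob_space "distr M borel \<zeta>" by (rule M.prob_space_distr) simp
  interpret pair_sigma_finite "distr M borel Z" "distr M borel \<zeta>" ..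
  interpret PZ\<zeta>: prob_space "distr M borel Z \<Otimes>\<^sub>M distr M borel \<zeta>"
    by (rule prob_space_pair) (rule PZ.prob_space_axioms, rule P\<zeta>.prob_space_axioms)
  \<comment> \<open>the cut-off at 0 makes \<open>F\<close> bounded on the whole product space\<close>
  define F where "F p = exp (- (C (fst p) * max 0 (snd p)))" for p :: "'a \<times> real"
  have [measurable]: "F \<in> borel_measurable (borel \<Otimes>\<^sub>M borel)" unfolding F_def by measurable
  have "integrable (distr M borel Z \<Otimes>\<^sub>M distr M borel \<zeta>) F"
    by (rule PZ\<zeta>.integrable_const_bound[where B=1]) (simp_all add: F_def C_nonneg)
  then have Fubini: "(\<integral>p. F p \<partial>(distr M borel Z \<Otimes>\<^sub>M distr M borel \<zeta>))
      = (\<integral>z. (\<integral>s. F (z, s) \<partial>distr M borel \<zeta>) \<partial>distr M borel Z)"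
    by (rule integral_fst'[symmetric])
  have inner: "(\<integral>s. F (z, s) \<partial>distr M borel \<zeta>) = L (C z)" for z
  proof -
    have "(\<integral>s. F (z, s) \<partial>distr M borel \<zeta>) = (\<integral>\<omega>. exp (- C z * \<zeta> \<omega>) \<partial>M)"
      by (subst integral_distr) (auto intro!: Bochner_Integration.integral_cong simp: F_def \<zeta>_nonneg)
    then show ?thesis using laplace[OF C_nonneg] by simp
  qed
  have "(\<integral>\<omega>. exp (- (C (Z \<omega>) * \<zeta> \<omega>)) \<partial>M) = (\<integral>\<omega>. F (Z \<omega>, \<zeta> \<omega>) \<partial>M)"
    by (auto intro!: Bochner_Integration.integral_cong simp: F_def \<zeta>_nonneg)
  also have "\<dots> = (\<integral>p. F p \<partial>distr M (borel \<Otimes>\<^sub>M borel) (\<lambda>\<omega>. (Z \<omega>, \<zeta> \<omega>)))"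
    by (subst integral_distr) auto
  also have "\<dots> = (\<integral>z. L (C z) \<partial>distr M borel Z)" by (simp only: indep Fubini inner)
  also have "\<dots> = (\<integral>\<omega>. L (C (Z \<omega>)) \<partial>M)" by (subst integral_distr) auto
  finally show ?thesis .
qed

lemma integral_exp_neg_sq_norm_stable:
  fixes \<mu> :: "(real ^ 'n) measure" and Z :: "'w \<Rightarrow> real ^ 'n" and W :: "real ^ 'n \<Rightarrow> real"
  assumes "prob_space \<mu>" "sets \<mu> = sets borel" "prob_space M"
    and "Z \<in> borel_measurable M"
    and "\<And>i. distributed M lborel (\<lambda>\<omega>. Z \<omega> $ i) std_normal_density"
    and "prob_space.indep_vars M (\<lambda>_. borel) (\<lambda>i \<omega>. Z \<omega> $ i) UNIV"
    and char: "\<And>z. char_fun_mv \<mu> z = exp (- complex_of_real (norm z powr \<alpha> * W (z /\<^sub>R norm z)))"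
    and "t \<ge> 0"
  shows "(\<integral>x. exp (- t * norm x ^ 2) \<partial>\<mu>)
    = (\<integral>\<omega>. exp (- ((2 * t) powr (\<alpha> / 2) * norm (Z \<omega>) powr \<alpha> * W (Z \<omega> /\<^sub>R norm (Z \<omega>)))) \<partial>M)"
proof -
  let ?c = "sqrt (2 * t)"
  have scaled: "char_fun_mv \<mu> (?c *\<^sub>R z)
      = complex_of_real (exp (- ((2 * t) powr (\<alpha> / 2) * norm z powr \<alpha> * W (z /\<^sub>R norm z))))" for z
  proof (cases "t = 0")
    case False
    then have "?c > 0" using \<open>t \<ge> 0\<close> by simp
    have "?c powr \<alpha> = (2 * t) powr (\<alpha> / 2)"
      using \<open>t \<ge> 0\<close> by (simp add: powr_half_sqrt[symmetric] powr_powr)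
    moreover have "(?c *\<^sub>R z) /\<^sub>R norm (?c *\<^sub>R z) = z /\<^sub>R norm z"
      using \<open>?c > 0\<close> by simp
    ultimately have "norm (?c *\<^sub>R z) powr \<alpha> * W ((?c *\<^sub>R z) /\<^sub>R norm (?c *\<^sub>R z))
        = (2 * t) powr (\<alpha> / 2) * norm z powr \<alpha> * W (z /\<^sub>R norm z)"
      using \<open>?c > 0\<close> by (simp only: norm_scaleR abs_of_pos powr_mult norm_ge_zero less_imp_le)
    then show ?thesis by (simp add: char flip: exp_of_real)
  qed (simp add: char)
  have "complex_of_real (\<integral>x. exp (- t * norm x ^ 2) \<partial>\<mu>) = (CLINT \<omega>|M. char_fun_mv \<mu> (?c *\<^sub>R Z \<omega>))"
    by (rule integral_exp_neg_sq_norm_eq_char_fun_mv) fact+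
  then show ?thesis by (simp add: scaled)
qed

lemma integral_exp_neg_sq_subordinated:
  fixes Z :: "'w \<Rightarrow> 'a::euclidean_space" and \<zeta> :: "'w \<Rightarrow> real" and W :: "'a \<Rightarrow> real"
  assumes "prob_space M" "\<alpha> > 0"
    and [measurable]: "Z \<in> borel_measurable M" "\<zeta> \<in> borel_measurable M" "W \<in> borel_measurable borel"
    and W_nonneg: "\<And>z. 0 \<le> W (z /\<^sub>R norm z)"
    and \<zeta>_nonneg: "\<And>\<omega>. \<omega> \<in> space M \<Longrightarrow> 0 \<le> \<zeta> \<omega>"
    and indep: "distr M (borel \<Otimes>\<^sub>M borel) (\<lambda>\<omega>. (Z \<omega>, \<zeta> \<omega>)) = distr M borel Z \<Otimes>\<^sub>M distr M borel \<zeta>"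
    and laplace: "\<And>s. s \<ge> 0 \<Longrightarrow>
      prob_space.expectation M (\<lambda>\<omega>. exp (- s * \<zeta> \<omega>)) = exp (- (s powr (\<alpha> / 2)))"
    and "t \<ge> 0"
  shows "(\<integral>\<omega>. exp (- t * (W (Z \<omega> /\<^sub>R norm (Z \<omega>)) powr (1 / \<alpha>) * sqrt (2 * \<zeta> \<omega>) * norm (Z \<omega>)) ^ 2) \<partial>M)
    = (\<integral>\<omega>. exp (- ((2 * t) powr (\<alpha> / 2) * norm (Z \<omega>) powr \<alpha> * W (Z \<omega> /\<^sub>R norm (Z \<omega>)))) \<partial>M)"
proof -
  define C where "C z = 2 * t * W (z /\<^sub>R norm z) powr (2 / \<alpha>) * norm z ^ 2" for z
  have [measurable]: "C \<in> borel_measurable borel" unfolding C_def by measurable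
  have C_nonneg: "0 \<le> C z" for z unfolding C_def using \<open>t \<ge> 0\<close> by simp
  have C_powr: "C z powr (\<alpha> / 2) = (2 * t) powr (\<alpha> / 2) * norm z powr \<alpha> * W (z /\<^sub>R norm z)" for z
  proof -
    have "(W (z /\<^sub>R norm z) powr (2 / \<alpha>)) powr (\<alpha> / 2) = W (z /\<^sub>R norm z)"
      using \<open>\<alpha> > 0\<close> W_nonneg[of z] by (simp add: powr_powr)
    moreover have "(norm z ^ 2) powr (\<alpha> / 2) = norm z powr \<alpha>"
      by (simp add: powr_powr flip: powr_numeral)
    ultimately show ?thesis
      unfolding C_def using \<open>t \<ge> 0\<close> by (simp add: powr_mult mult_ac)
  qed
  have C_\<zeta>: "t * (W (Z \<omega> /\<^sub>R norm (Z \<omega>)) powr (1 / \<alpha>) * sqrt (2 * \<zeta> \<omega>) * norm (Z \<omega>)) ^ 2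
      = C (Z \<omega>) * \<zeta> \<omega>" if "\<omega> \<in> space M" for \<omega>
  proof -
    have "(W (Z \<omega> /\<^sub>R norm (Z \<omega>)) powr (1 / \<alpha>)) ^ 2 = W (Z \<omega> /\<^sub>R norm (Z \<omega>)) powr (2 / \<alpha>)"
      by (simp add: power2_eq_square flip: powr_add)
    then show ?thesis
      unfolding C_def using \<zeta>_nonneg[OF that] by (simp add: power_mult_distrib mult_ac)
  qed
  have "(\<integral>\<omega>. exp (- (C (Z \<omega>) * \<zeta> \<omega>)) \<partial>M) = (\<integral>\<omega>. exp (- (C (Z \<omega>) powr (\<alpha> / 2))) \<partial>M)"
    by (rule integral_exp_neg_mult_indep_eq_laplace[OF \<open>prob_space M\<close> _ _ _ _ \<zeta>_nonneg C_nonneg indep laplace])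
      simp_all
  then show ?thesis
    by (simp add: C_powr C_\<zeta> cong: Bochner_Integration.integral_cong)
qed

theorem proposition7p2:
  fixes \<alpha> :: real
    and lam :: "(real ^ 'n) measure"
    and \<mu> :: "(real ^ 'n) measure"
    and g :: "real ^ 'n \<Rightarrow> real"
    and M :: "'w measure"
    and Z :: "'w \<Rightarrow> real ^ 'n"
    and \<zeta> :: "'w \<Rightarrow> real"
  assumes dim: "CARD('n) \<ge> 2"
    and alpha: "1 < \<alpha>" "\<alpha> < 2"
    and lam_sets: "sets lam = sets borel"
    and lam_fin: "finite_measure lam"
    and lam_sphere: "emeasure lam (UNIV - sphere 0 1) = 0"
    and lam_nonzero: "emeasure lam (sphere 0 1) \<noteq> 0"
    and mu_prob: "prob_space \<mu>"
    and mu_sets: "sets \<mu> = sets borel"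
    and mu_char: "\<And>z. char_fun_mv \<mu> z =
        exp (- complex_of_real (norm z powr \<alpha>) * stable_V \<alpha> lam (z /\<^sub>R norm z))"
    and mu_nondeg: "nondegenerate \<mu>"
    and g_meas: "g \<in> borel_measurable borel"
    and g_nonneg: "\<And>x. g x \<ge> 0"
    and mu_density: "\<mu> = density lborel (\<lambda>x. ennreal (g x))"
    and g_sym: "\<And>x. g x = g (- x)"
    and M_prob: "prob_space M"
    and Z_meas: "Z \<in> borel_measurable M"
    and Z_gauss: "\<And>i. distributed M lborel (\<lambda>\<omega>. Z \<omega> $ i) std_normal_density"
    and Z_indep: "prob_space.indep_vars M (\<lambda>_. borel) (\<lambda>i \<omega>. Z \<omega> $ i) UNIV"
    and zeta_meas: "\<zeta> \<in> borel_measurable M"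
    and zeta_pos: "\<And>\<omega>. \<omega> \<in> space M \<Longrightarrow> \<zeta> \<omega> > 0"
    and zeta_indep: "distr M (borel \<Otimes>\<^sub>M borel) (\<lambda>\<omega>. (Z \<omega>, \<zeta> \<omega>))
        = distr M borel Z \<Otimes>\<^sub>M distr M borel \<zeta>"
    and zeta_laplace: "\<And>t. t \<ge> 0 \<Longrightarrow>
        prob_space.expectation M (\<lambda>\<omega>. exp (- t * \<zeta> \<omega>)) = exp (- (t powr (\<alpha> / 2)))"
  shows "distr M borel (\<lambda>\<omega>. Re (stable_V \<alpha> lam (Z \<omega> /\<^sub>R norm (Z \<omega>))) powr (1 / \<alpha>)
              * sqrt (2 * \<zeta> \<omega>) * norm (Z \<omega>))
         = distr \<mu> borel norm"
proof -
  have [measurable_cong]: "sets \<mu> = sets borel" by fact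
  have [measurable]: "Z \<in> borel_measurable M" "\<zeta> \<in> borel_measurable M" by fact+
  define W where "W u = Re (stable_V \<alpha> lam u)" for u :: "real ^ 'n"
  have [measurable]: "W \<in> borel_measurable borel"
    using borel_measurable_stable_V[OF lam_sets lam_fin] unfolding W_def by measurable
  have V_real: "stable_V \<alpha> lam (z /\<^sub>R norm z) = complex_of_real (W (z /\<^sub>R norm z))"
    and W_nonneg: "0 \<le> W (z /\<^sub>R norm z)" for z
  proof -
    let ?u = "z /\<^sub>R norm z"
    have "Im (stable_V \<alpha> lam ?u) = 0 \<and> 0 \<le> Re (stable_V \<alpha> lam ?u)"
    proof (cases "z = 0")
      case False
      then show ?thesis
        using stable_exponent_real_nonneg_if_char_fun_mv_real[OF mu_prob _ mu_char, of ?u] alpha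
          char_fun_mv_real_if_symmetric_density[OF g_meas g_nonneg g_sym, folded mu_density]
        by simp
    qed simp
    then show "stable_V \<alpha> lam ?u = complex_of_real (W ?u)" "0 \<le> W ?u"
      by (simp_all add: W_def complex_eq_iff)
  qed
  define R where "R \<omega> = W (Z \<omega> /\<^sub>R norm (Z \<omega>)) powr (1 / \<alpha>) * sqrt (2 * \<zeta> \<omega>) * norm (Z \<omega>)" for \<omega>
  have "distr M borel R = distr \<mu> borel norm"
  proof (rule distr_eq_if_integral_exp_neg_sq_eq[OF M_prob mu_prob])
    show "R \<in> borel_measurable M" unfolding R_def by measurable
    show "0 \<le> R \<omega>" if "\<omega> \<in> space M" for \<omega>
      unfolding R_def using zeta_pos[OF that] by simp
    have char: "char_fun_mv \<mu> z = exp (- complex_of_real (norm z powr \<alpha> * W (z /\<^sub>R norm z)))" for z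
      by (simp add: mu_char V_real)
    fix k :: nat
    have "(\<integral>\<omega>. exp (- real k * R \<omega> ^ 2) \<partial>M)
        = (\<integral>\<omega>. exp (- ((2 * real k) powr (\<alpha> / 2) * norm (Z \<omega>) powr \<alpha> * W (Z \<omega> /\<^sub>R norm (Z \<omega>)))) \<partial>M)"
      unfolding R_def by (rule integral_exp_neg_sq_subordinated)
        (use M_prob alpha W_nonneg zeta_pos zeta_indep zeta_laplace in \<open>simp_all add: less_imp_le\<close>)
    also have "\<dots> = (\<integral>x. exp (- real k * norm x ^ 2) \<partial>\<mu>)"
      by (rule integral_exp_neg_sq_norm_stable[OF mu_prob mu_sets M_prob Z_meas Z_gauss Z_indep char,
        symmetric]) simp
    finally show "(\<integral>\<omega>. exp (- real k * R \<omega> ^ 2) \<partial>M) = (\<integral>x. exp (- real k * norm x ^ 2) \<partial>\<mu>)" .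
  qed simp_all
  then show ?thesis unfolding R_def W_def .
qed

end
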